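(* Let $n\geqslant 2$ and let $G$ (gene tree) and $S$ (species tree) be caterpillar trees whose leaves are bijectively labeled by the same set $X$ of $n$ labels, with canonical label vectors $\mathbf g=(g_1,\dots,g_n)$ and $\mathbf s=(s_1,\dots,s_n)$; $G$ and $S$ need not have the same labeled topology. For a label $x$, let $\sigma(x)$ denote the index of $x$ in $\mathbf s$, and for $1\leqslant j\leqslant n-1$ put $F(j)=\max\{\sigma(g_1),\dots,\sigma(g_{j+1})\}-1$. Define the roadblock set $$B_{G,S}=\{(i,j)\in\mathbb Z^2 : 1\leqslant j\leqslant i\leqslant n-1,\ i<F(j)\}.$$ Then there is a bijection between the set of coalescent histories for $(G,S)$ and the set of monotonic lattice paths from $(0,0)$ to $(n-1,n-1)$ that do not cross above the diagonal $y=x$ and that pass through no point of $B_{G,S}$.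
   Context: All trees are binary, rooted and leaf-labeled. A caterpillar tree with $n$ leaves is a tree in which some internal node is descended from all other internal nodes; it has a unique cherry (internal node with exactly two descendant leaves). Its canonical label vector $(x_1,\dots,x_n)$ has $x_1,x_2$ the labels of the two cherry leaves and, for $3\leqslant i\leqslant n$, $x_i$ the label of the leaf separated from the root by $n-i+1$ edges (vectors differing only by swapping $x_1,x_2$ describe the same tree). Internal nodes are numbered $1,\dots,n-1$ from the cherry (node 1) to the root (node $n-1$), so node $i$ has descendant leaves $x_1,\dots,x_{i+1}$; internal edge $i$ is the edge immediately above node $i$, the tree being considered to possess an extra edge above its root (edge $n-1$). A node or edge is considered descended from itself. A coalescent history for $(G,S)$ is a function $h$ from the internal nodes of $G$ to the internal edges of $S$ (including the edge above the root) such that (1) for each internal node $v$ of $G$, every label of a leaf descended from $v$ in $G$ labels a leaf of $S$ descended from edge $h(v)$; and (2) whenever internal node $v_2$ is descended from internal node $v_1$ in $G$, edge $h(v_2)$ is descended from edge $h(v_1)$ in $S$. A monotonic path from $(0,0)$ to $(a,b)$ is a sequence of lattice points starting at $(0,0)$ and ending at $(a,b)$ in which each step adds $(1,0)$ or $(0,1)$; it does not cross above $y=x$ if every point $(x,y)$ on it satisfies $y\leqslant x$. *)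

theory Defs
  imports Main "HOL-Library.FuncSet"
begin

text \<open>A caterpillar tree with n leaves is given by its canonical label vector
  x :: nat \<Rightarrow> 'a, used on indices 1..n. Internal node i (1 \<le> i \<le> n-1) has
  descendant leaves x 1, ..., x (i+1); internal edge i lies immediately above node i
  (edge n-1 being the extra edge above the root).\<close>

definition cat_leaves :: "(nat \<Rightarrow> 'a) \<Rightarrow> nat \<Rightarrow> 'a set" where
  "cat_leaves x i = x ` {1..i+1}"

definition cat_desc :: "nat \<Rightarrow> nat \<Rightarrow> bool" where
  "cat_desc i k \<longleftrightarrow> i \<le> k"

definition coal_histories :: "nat \<Rightarrow> (nat \<Rightarrow> 'a) \<Rightarrow> (nat \<Rightarrow> 'a) \<Rightarrow> (nat \<Rightarrow> nat) set" where
  "coal_histories n g s =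
     {h \<in> {1..n-1} \<rightarrow>\<^sub>E {1..n-1}.
        (\<forall>v\<in>{1..n-1}. cat_leaves g v \<subseteq> cat_leaves s (h v)) \<and>
        (\<forall>v1\<in>{1..n-1}. \<forall>v2\<in>{1..n-1}. cat_desc v2 v1 \<longrightarrow> cat_desc (h v2) (h v1))}"

definition sigma :: "nat \<Rightarrow> (nat \<Rightarrow> 'a) \<Rightarrow> 'a \<Rightarrow> nat" where
  "sigma n s a = (THE i. i \<in> {1..n} \<and> s i = a)"

definition Ffun :: "nat \<Rightarrow> (nat \<Rightarrow> 'a) \<Rightarrow> (nat \<Rightarrow> 'a) \<Rightarrow> nat \<Rightarrow> int" where
  "Ffun n g s j = int (Max ((\<lambda>k. sigma n s (g k)) ` {1..j+1})) - 1"

definition roadblocks :: "nat \<Rightarrow> (nat \<Rightarrow> 'a) \<Rightarrow> (nat \<Rightarrow> 'a) \<Rightarrow> (int \<times> int) set" where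
  "roadblocks n g s = {(i, j). 1 \<le> j \<and> j \<le> i \<and> i \<le> int n - 1 \<and>
                          i < Ffun n g s (nat j)}"

definition monotonic_path :: "(int \<times> int) list \<Rightarrow> int \<Rightarrow> int \<Rightarrow> bool" where
  "monotonic_path p a b \<longleftrightarrow> p \<noteq> [] \<and> hd p = (0,0) \<and> last p = (a,b) \<and>
     (\<forall>k. Suc k < length p \<longrightarrow>
        p ! Suc k = (fst (p ! k) + 1, snd (p ! k)) \<or> p ! Suc k = (fst (p ! k), snd (p ! k) + 1))"

definition not_above_diag :: "(int \<times> int) list \<Rightarrow> bool" where
  "not_above_diag p \<longleftrightarrow> (\<forall>(x,y)\<in>set p. y \<le> x)"

definition roadblock_paths :: "nat \<Rightarrow> (nat \<Rightarrow> 'a) \<Rightarrow> (nat \<Rightarrow> 'a) \<Rightarrow> (int \<times> int) list set" where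
  "roadblock_paths n g s = {p. monotonic_path p (int n - 1) (int n - 1) \<and> not_above_diag p \<and>
                               set p \<inter> roadblocks n g s = {}}"

end

theory Submission
  imports Defs
begin

(* A coalescent history h is a monotone map from the nodes 1..n-1 of G to the edges 1..n-1
   of S with h v \<ge> F v: node v fits on edge e exactly when g_1, ..., g_(v+1) all occur among
   s_1, ..., s_(e+1), i.e. when e \<ge> F v.  A monotone lattice path from (0,0) to (N,N) is
   determined by the column a j at which it enters row j, and a may be any monotone map
   into {0..N}.  Such a path stays weakly below the diagonal iff a j \<ge> j, and avoids the
   roadblocks iff moreover a j \<ge> F j.  Since F j \<ge> j, the admissible paths are exactly
   those whose entry columns form a coalescent history. *)

lemma bij_betw_preimage_subset:
  assumes "bij_betw f A B" "C \<subseteq> B"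
  shows "bij_betw f {a \<in> A. f a \<in> C} C"
proof (rule bij_betw_subset[OF assms(1)])
  show "f ` {a \<in> A. f a \<in> C} = C"
  proof (intro equalityI subsetI)
    fix c assume c: "c \<in> C"
    then obtain a where "a \<in> A" "c = f a"
      using assms bij_betw_imp_surj_on[OF assms(1)] by (metis imageE subsetD)
    then show "c \<in> f ` {a \<in> A. f a \<in> C}"
      using c by blast
  qed auto
qed auto

definition lattice_step :: "int \<times> int \<Rightarrow> int \<times> int \<Rightarrow> bool" where
  "lattice_step u v \<longleftrightarrow> v = (fst u + 1, snd u) \<or> v = (fst u, snd u + 1)"

lemma monotonic_path_iff:
  "monotonic_path p a b \<longleftrightarrow>
     p \<noteq> [] \<and> hd p = (0, 0) \<and> last p = (a, b) \<and> successively lattice_step p"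
  by (simp add: monotonic_path_def successively_conv_nth lattice_step_def)

lemma lattice_path_sorted:
  assumes "successively lattice_step p"
  shows "sorted_wrt (\<lambda>u v. fst u \<le> fst v \<and> snd u \<le> snd v) p"
proof -
  have "successively (\<lambda>u v. fst u \<le> fst v \<and> snd u \<le> snd v) p"
    using assms by (rule successively_mono) (auto simp: lattice_step_def)
  then show ?thesis
    by (subst (asm) successively_conv_sorted_wrt) (auto simp: transp_def)
qed

lemma lattice_path_hd_le:
  assumes "successively lattice_step p" "z \<in> set p"
  shows "fst (hd p) \<le> fst z \<and> snd (hd p) \<le> snd z"
  using lattice_path_sorted[OF assms(1)] assms(2) by (cases p) auto

lemma lattice_path_le_last:
  assumes "successively lattice_step p" "z \<in> set p"
  shows "fst z \<le> fst (last p) \<and> snd z \<le> snd (last p)"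
proof -
  obtain q where p: "p = q @ [last p]"
    using assms(2) by (cases p rule: rev_cases) auto
  then have "sorted_wrt (\<lambda>u v. fst u \<le> fst v \<and> snd u \<le> snd v) (q @ [last p])"
    using lattice_path_sorted[OF assms(1)] by simp
  then show ?thesis
    using assms(2) by (subst (asm) p) (auto simp: sorted_wrt_append)
qed

lemma lattice_path_crosses_row:
  assumes "successively lattice_step p" "p \<noteq> []" "snd (hd p) < y" "y \<le> snd (last p)"
  shows "\<exists>x. (x, y - 1) \<in> set p \<and> (x, y) \<in> set p"
  using assms
proof (induction p)
  case (Cons u r)
  then have "r \<noteq> []" by auto
  with Cons.prems have steps: "successively lattice_step r" "lattice_step u (hd r)"
    by (auto simp: successively_Cons)
  show ?case
  proof (cases "hd r = (fst u, y)")
    case True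
    then have "u = (fst u, y - 1)"
      using steps(2) Cons.prems(3) by (auto simp: lattice_step_def prod_eq_iff)
    then show ?thesis
      using True hd_in_set[OF \<open>r \<noteq> []\<close>] by (metis list.set_intros)
  next
    case False
    then have "snd (hd r) < y"
      using steps(2) Cons.prems(3) by (auto simp: lattice_step_def)
    then show ?thesis
      using Cons.IH[OF steps(1) \<open>r \<noteq> []\<close>] Cons.prems(4) \<open>r \<noteq> []\<close> by auto
  qed
qed simp

lemma lattice_path_visits_row:
  assumes "successively lattice_step p" "p \<noteq> []" "snd (hd p) \<le> y" "y \<le> snd (last p)"
  shows "\<exists>x. (x, y) \<in> set p"
proof (cases "y = snd (hd p)")
  case True
  then show ?thesis
    using hd_in_set[OF assms(2)] by (metis prod.collapse)
next
  case False
  then have "snd (hd p) < y"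
    using assms(3) by simp
  then show ?thesis
    using lattice_path_crosses_row[OF assms(1,2)] assms(4) by blast
qed

lemma lattice_path_visits_lower_row:
  assumes "successively lattice_step p" "(x, y) \<in> set p" "snd (hd p) \<le> y'" "y' \<le> y"
  shows "\<exists>x'\<le>x. (x', y') \<in> set p"
proof -
  obtain u w where p: "p = u @ (x, y) # w"
    using split_list[OF assms(2)] by blast
  define q where "q = u @ [(x, y)]"
  have q: "successively lattice_step q" "q \<noteq> []" "hd q = hd p" "last q = (x, y)"
    using assms(1) unfolding p q_def by (auto simp: successively_append_iff hd_append)
  then obtain x' where "(x', y') \<in> set q"
    using lattice_path_visits_row[OF q(1,2)] assms(3,4) by auto
  moreover from this have "x' \<le> x"
    using lattice_path_le_last[OF q(1)] q(4) by fastforce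
  ultimately show ?thesis
    unfolding p q_def by auto
qed

lemma lattice_path_length:
  assumes "successively lattice_step p" "p \<noteq> []"
  shows "fst (last p) + snd (last p) = fst (hd p) + snd (hd p) + int (length p - 1)"
  using assms
proof (induction p)
  case (Cons u r)
  show ?case
  proof (cases "r = []")
    case False
    then have "successively lattice_step r" "lattice_step u (hd r)"
      using Cons.prems by (auto simp: successively_Cons)
    moreover have "int (length r - 1) + 1 = int (length r)"
      using False by (cases r) auto
    ultimately show ?thesis
      using Cons.IH False by (auto simp: lattice_step_def)
  qed simp
qed simp

(* Min of the empty set is unspecified, so row_entry p y is only meaningful if p meets row y. *)
definition row_entry :: "(int \<times> int) list \<Rightarrow> int \<Rightarrow> int" where
  "row_entry p y = Min {x. (x, y) \<in> set p}"

lemma finite_row_points: "finite {x. (x, y) \<in> set p}"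
  by (rule finite_subset[of _ "fst ` set p"]) force+

lemma row_entry_mem: "(x, y) \<in> set p \<Longrightarrow> (row_entry p y, y) \<in> set p"
  unfolding row_entry_def using Min_in[OF finite_row_points, of y p] by blast

lemma row_entry_le: "(x, y) \<in> set p \<Longrightarrow> row_entry p y \<le> x"
  unfolding row_entry_def by (simp add: finite_row_points)

lemma row_entry_eqI:
  "(x, y) \<in> set p \<Longrightarrow> (\<And>x'. (x', y) \<in> set p \<Longrightarrow> x \<le> x') \<Longrightarrow> row_entry p y = x"
  unfolding row_entry_def by (rule Min_eqI) (auto simp: finite_row_points)

lemma row_entry_Cons: "snd u \<noteq> y \<Longrightarrow> row_entry (u # p) y = row_entry p y"
  unfolding row_entry_def by (cases u) auto

lemma row_entry_mono:
  assumes "successively lattice_step p" "p \<noteq> []" "snd (hd p) \<le> y'" "y' \<le> y" "y \<le> snd (last p)"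
  shows "row_entry p y' \<le> row_entry p y"
proof -
  obtain x where "(x, y) \<in> set p"
    using lattice_path_visits_row[OF assms(1,2)] assms(3-5) by fastforce
  then have "(row_entry p y, y) \<in> set p"
    by (rule row_entry_mem)
  then obtain x' where "x' \<le> row_entry p y" "(x', y') \<in> set p"
    using lattice_path_visits_lower_row[OF assms(1)] assms(3,4) by blast
  then show ?thesis
    using row_entry_le by fastforce
qed

lemma row_entry_bounds:
  assumes "monotonic_path p (int N) (int N)" "0 \<le> y" "y \<le> int N"
  shows "(row_entry p y, y) \<in> set p" "0 \<le> row_entry p y" "row_entry p y \<le> int N"
proof -
  have p: "successively lattice_step p" "p \<noteq> []" "hd p = (0, 0)" "last p = (int N, int N)"
    using assms(1) by (auto simp: monotonic_path_iff)
  then obtain x where "(x, y) \<in> set p"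
    using lattice_path_visits_row[OF p(1,2)] assms(2,3) by fastforce
  then show "(row_entry p y, y) \<in> set p"
    by (rule row_entry_mem)
  then show "0 \<le> row_entry p y" "row_entry p y \<le> int N"
    using lattice_path_hd_le[OF p(1)] lattice_path_le_last[OF p(1)] p(3,4) by fastforce+
qed

lemma lattice_path_goes_up_iff:
  assumes "successively lattice_step ((x, y) # r)" "r \<noteq> []" "last r = (int N, int N)"
  shows "hd r = (x, y + 1) \<longleftrightarrow> y < int N \<and> row_entry ((x, y) # r) (y + 1) \<le> x"
proof -
  let ?p = "(x, y) # r"
  have r: "successively lattice_step r" "lattice_step (x, y) (hd r)"
    using assms(1,2) by (auto simp: successively_Cons)
  have right_of_hd: "fst (hd r) \<le> x'" if "(x', y + 1) \<in> set ?p" for x'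
    using lattice_path_hd_le[OF r(1), of "(x', y + 1)"] that by auto
  show ?thesis
  proof
    assume up: "hd r = (x, y + 1)"
    have "y < int N"
      using lattice_path_le_last[OF r(1) hd_in_set[OF assms(2)]] up assms(3) by simp
    moreover have "(x, y + 1) \<in> set ?p"
      using up hd_in_set[OF assms(2)] by simp
    ultimately show "y < int N \<and> row_entry ?p (y + 1) \<le> x"
      using row_entry_le by blast
  next
    assume "y < int N \<and> row_entry ?p (y + 1) \<le> x"
    moreover obtain x' where "(x', y + 1) \<in> set ?p"
      using lattice_path_visits_row[OF assms(1), of "y + 1"] assms(2,3) \<open>y < int N \<and> _\<close> by auto
    ultimately have "fst (hd r) \<le> x"
      using right_of_hd[OF row_entry_mem] by fastforce
    then show "hd r = (x, y + 1)"
      using r(2) by (auto simp: lattice_step_def)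
  qed
qed

primrec entry_walk :: "(nat \<Rightarrow> nat) \<Rightarrow> nat \<Rightarrow> int \<Rightarrow> int \<Rightarrow> nat \<Rightarrow> (int \<times> int) list" where
  "entry_walk a N x y 0 = [(x, y)]"
| "entry_walk a N x y (Suc k) = (x, y) #
     (if y < int N \<and> int (a (nat (y + 1))) \<le> x then entry_walk a N x (y + 1) k
      else entry_walk a N (x + 1) y k)"

definition entry_path :: "(nat \<Rightarrow> nat) \<Rightarrow> nat \<Rightarrow> (int \<times> int) list" where
  "entry_path a N = entry_walk a N 0 0 (2 * N)"

lemma hd_entry_walk [simp]: "hd (entry_walk a N x y k) = (x, y)"
  by (cases k) simp_all

lemma entry_walk_not_Nil [simp]: "entry_walk a N x y k \<noteq> []"
  by (cases k) simp_all

lemma successively_entry_walk: "successively lattice_step (entry_walk a N x y k)"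
  by (induction k arbitrary: x y) (auto simp: successively_Cons lattice_step_def)

definition between_entries :: "(nat \<Rightarrow> nat) \<Rightarrow> nat \<Rightarrow> int \<Rightarrow> int \<Rightarrow> bool" where
  "between_entries a N x y \<longleftrightarrow>
     (1 \<le> y \<longrightarrow> int (a (nat y)) \<le> x) \<and> (y < int N \<longrightarrow> x \<le> int (a (nat (y + 1))))"

definition entry_walk_invariant :: "(nat \<Rightarrow> nat) \<Rightarrow> nat \<Rightarrow> int \<Rightarrow> int \<Rightarrow> nat \<Rightarrow> bool" where
  "entry_walk_invariant a N x y k \<longleftrightarrow>
     x + y + int k = 2 * int N \<and> 0 \<le> y \<and> y \<le> int N \<and> x \<le> int N \<and> between_entries a N x y"

lemma entry_walk_invariant_Suc:
  assumes a: "\<forall>j\<in>{1..N}. a j \<le> N" "mono_on {1..N} a"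
    and inv: "entry_walk_invariant a N x y (Suc k)"
  shows "if y < int N \<and> int (a (nat (y + 1))) \<le> x then entry_walk_invariant a N x (y + 1) k
         else entry_walk_invariant a N (x + 1) y k"
proof (cases "y < int N \<and> int (a (nat (y + 1))) \<le> x")
  case up: True
  have "x = int (a (nat (y + 1)))"
    using up inv by (simp add: entry_walk_invariant_def between_entries_def)
  moreover have "a (nat (y + 1)) \<le> a (nat (y + 1 + 1))" if "y + 1 < int N"
  proof (rule mono_onD[OF a(2)])
    show "nat (y + 1) \<in> {1..N}" "nat (y + 1 + 1) \<in> {1..N}"
      using that inv by (auto simp: entry_walk_invariant_def)
  qed simp
  ultimately show ?thesis
    using up inv by (auto simp: entry_walk_invariant_def between_entries_def)
next
  case right: False
  have "x + 1 \<le> int N"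
  proof (cases "y < int N")
    case True
    then have "x < int (a (nat (y + 1)))"
      using right by simp
    moreover have "nat (y + 1) \<in> {1..N}"
      using True inv by (auto simp: entry_walk_invariant_def)
    then have "a (nat (y + 1)) \<le> N"
      using a(1) by blast
    ultimately show ?thesis
      by simp
  qed (use inv in \<open>auto simp: entry_walk_invariant_def\<close>)
  then show ?thesis
    using right inv by (auto simp: entry_walk_invariant_def between_entries_def)
qed

lemma entry_walk_last_and_between_entries:
  assumes "\<forall>j\<in>{1..N}. a j \<le> N" "mono_on {1..N} a" "entry_walk_invariant a N x y k"
  shows "last (entry_walk a N x y k) = (int N, int N) \<and>
    (\<forall>(x', y')\<in>set (entry_walk a N x y k). between_entries a N x' y')"
  using assms(3)
proof (induction k arbitrary: x y)
  case 0
  then show ?case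
    by (auto simp: entry_walk_invariant_def)
next
  case (Suc k)
  have "between_entries a N x y"
    using Suc.prems by (simp add: entry_walk_invariant_def)
  then show ?case
    using entry_walk_invariant_Suc[OF assms(1,2) Suc.prems] Suc.IH
    by (auto split: if_splits)
qed

definition monotone_maps :: "nat \<Rightarrow> (nat \<Rightarrow> nat) set" where
  "monotone_maps N = {a \<in> {1..N} \<rightarrow>\<^sub>E {0..N}. mono_on {1..N} a}"

lemma
  assumes "a \<in> monotone_maps N"
  shows entry_path_monotonic: "monotonic_path (entry_path a N) (int N) (int N)"
    and row_entry_entry_path: "j \<in> {1..N} \<Longrightarrow> row_entry (entry_path a N) (int j) = int (a j)"
proof -
  let ?p = "entry_path a N"
  have start: "entry_walk_invariant a N 0 0 (2 * N)"
    by (simp add: entry_walk_invariant_def between_entries_def)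
  have "\<forall>j\<in>{1..N}. a j \<le> N" "mono_on {1..N} a"
    using assms by (auto simp: monotone_maps_def)
  then have p: "last ?p = (int N, int N)" "\<And>x y. (x, y) \<in> set ?p \<Longrightarrow> between_entries a N x y"
    using entry_walk_last_and_between_entries[OF _ _ start] unfolding entry_path_def by auto
  then show "monotonic_path ?p (int N) (int N)"
    by (simp add: monotonic_path_iff entry_path_def successively_entry_walk)
  assume j: "j \<in> {1..N}"
  then obtain x where x: "(x, int j - 1) \<in> set ?p" "(x, int j) \<in> set ?p"
    using lattice_path_crosses_row[of ?p "int j"] p(1)
    by (auto simp: entry_path_def successively_entry_walk)
  have "x = int (a j)"
    using p(2)[OF x(1)] p(2)[OF x(2)] j by (auto simp: between_entries_def)
  show "row_entry ?p (int j) = int (a j)"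
  proof (rule row_entry_eqI)
    fix x' assume "(x', int j) \<in> set ?p"
    then show "int (a j) \<le> x'"
      using p(2) j by (force simp: between_entries_def)
  qed (use x(2) \<open>x = int (a j)\<close> in simp)
qed

lemma lattice_path_eq_entry_walk:
  assumes "successively lattice_step p" "p \<noteq> []" "hd p = (x, y)" "last p = (int N, int N)"
    and "0 \<le> y" "\<And>j. y < int j \<Longrightarrow> j \<le> N \<Longrightarrow> row_entry p (int j) = int (a j)"
  shows "p = entry_walk a N x y (length p - 1)"
  using assms
proof (induction p arbitrary: x y)
  case (Cons u r)
  show ?case
  proof (cases "r = []")
    case True
    then show ?thesis
      using Cons.prems(3) by simp
  next
    case False
    have u: "u = (x, y)"
      using Cons.prems(3) by simp
    have r: "successively lattice_step r" "lattice_step (x, y) (hd r)" "last r = (int N, int N)"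
      using Cons.prems False u by (auto simp: successively_Cons)
    then have y_le: "y \<le> snd (hd r)"
      by (auto simp: lattice_step_def)
    have "r = entry_walk a N (fst (hd r)) (snd (hd r)) (length r - 1)"
    proof (rule Cons.IH[OF r(1) False _ r(3)])
      fix j assume "snd (hd r) < int j" "j \<le> N"
      then show "row_entry r (int j) = int (a j)"
        using Cons.prems(6)[of j] row_entry_Cons[of u "int j" r] u y_le by simp
    qed (use Cons.prems(5) y_le in auto)
    moreover have "hd r = (x, y + 1) \<longleftrightarrow> y < int N \<and> int (a (nat (y + 1))) \<le> x"
      using lattice_path_goes_up_iff[OF Cons.prems(1)[unfolded u] False r(3)]
        Cons.prems(5) Cons.prems(6)[of "nat (y + 1)"] u by (auto simp: nat_le_iff)
    ultimately have "entry_walk a N x y (Suc (length r - 1)) = u # r"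
      using r(2) u by (auto simp: lattice_step_def)
    moreover have "length (u # r) - 1 = Suc (length r - 1)"
      using False by simp
    ultimately show ?thesis
      by metis
  qed
qed simp

definition row_entries :: "(int \<times> int) list \<Rightarrow> nat \<Rightarrow> nat \<Rightarrow> nat" where
  "row_entries p N = restrict (\<lambda>j. nat (row_entry p (int j))) {1..N}"

lemma row_entries_entry_path:
  assumes "a \<in> monotone_maps N"
  shows "row_entries (entry_path a N) N = a"
proof (rule ext)
  fix j
  show "row_entries (entry_path a N) N j = a j"
  proof (cases "j \<in> {1..N}")
    case True
    then show ?thesis
      using row_entry_entry_path[OF assms True] by (simp add: row_entries_def)
  next
    case False
    moreover have "a \<in> {1..N} \<rightarrow>\<^sub>E {0..N}"
      using assms by (simp add: monotone_maps_def)
    ultimately show ?thesis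
      using PiE_arb[of a "{1..N}" "\<lambda>_. {0..N}" j] by (auto simp: row_entries_def)
  qed
qed

lemma row_entries_mem_monotone_maps:
  assumes "monotonic_path p (int N) (int N)"
  shows "row_entries p N \<in> monotone_maps N"
proof -
  have p: "successively lattice_step p" "p \<noteq> []" "hd p = (0, 0)" "last p = (int N, int N)"
    using assms by (auto simp: monotonic_path_iff)
  have "nat (row_entry p (int j)) \<le> N" if "j \<le> N" for j
    using row_entry_bounds(3)[OF assms, of "int j"] that by simp
  moreover have "mono_on {1..N} (row_entries p N)"
    using row_entry_mono[OF p(1,2)] p(3,4)
    by (intro mono_onI) (auto simp: row_entries_def nat_mono)
  ultimately show ?thesis
    by (auto simp: monotone_maps_def row_entries_def)
qed

lemma entry_path_row_entries:
  assumes "monotonic_path p (int N) (int N)"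
  shows "entry_path (row_entries p N) N = p"
proof -
  have p: "successively lattice_step p" "p \<noteq> []" "hd p = (0, 0)" "last p = (int N, int N)"
    using assms by (auto simp: monotonic_path_iff)
  have "length p - 1 = 2 * N"
    using lattice_path_length[OF p(1,2)] p(3,4) by simp
  moreover have "p = entry_walk (row_entries p N) N 0 0 (length p - 1)"
    using row_entry_bounds(2)[OF assms]
    by (intro lattice_path_eq_entry_walk[OF p]) (auto simp: row_entries_def)
  ultimately show ?thesis
    by (simp add: entry_path_def)
qed

lemma bij_betw_entry_path:
  "bij_betw (\<lambda>a. entry_path a N) (monotone_maps N) {p. monotonic_path p (int N) (int N)}"
  by (rule bij_betw_byWitness[where f' = "\<lambda>p. row_entries p N"])
    (auto simp: row_entries_entry_path entry_path_row_entries row_entries_mem_monotone_maps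
      entry_path_monotonic)

lemma
  assumes "a \<in> monotone_maps N"
  shows entry_path_mem: "j \<in> {1..N} \<Longrightarrow> (int (a j), int j) \<in> set (entry_path a N)"
    and entry_path_points: "(x, y) \<in> set (entry_path a N) \<Longrightarrow>
      0 \<le> x \<and> 0 \<le> y \<and> y \<le> int N \<and> (1 \<le> y \<longrightarrow> int (a (nat y)) \<le> x)"
proof -
  let ?p = "entry_path a N"
  have mp: "monotonic_path ?p (int N) (int N)"
    by (rule entry_path_monotonic[OF assms])
  then have p: "successively lattice_step ?p" "hd ?p = (0, 0)" "last ?p = (int N, int N)"
    by (auto simp: monotonic_path_iff)
  show "(int (a j), int j) \<in> set ?p" if "j \<in> {1..N}"
    using row_entry_bounds(1)[OF mp, of "int j"] row_entry_entry_path[OF assms that] that by simp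
  assume xy: "(x, y) \<in> set ?p"
  have "int (a (nat y)) \<le> x" if "1 \<le> y" "y \<le> int N"
  proof -
    have j: "nat y \<in> {1..N}"
      using that by auto
    show ?thesis
      using row_entry_entry_path[OF assms j] row_entry_le[OF xy] that by simp
  qed
  then show "0 \<le> x \<and> 0 \<le> y \<and> y \<le> int N \<and> (1 \<le> y \<longrightarrow> int (a (nat y)) \<le> x)"
    using lattice_path_hd_le[OF p(1) xy] lattice_path_le_last[OF p(1) xy] p(2,3) by auto
qed

lemma not_above_diag_entry_path_iff:
  assumes "a \<in> monotone_maps N"
  shows "not_above_diag (entry_path a N) \<longleftrightarrow> (\<forall>j\<in>{1..N}. j \<le> a j)"
proof
  assume "not_above_diag (entry_path a N)"
  then show "\<forall>j\<in>{1..N}. j \<le> a j"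
    using entry_path_mem[OF assms] by (fastforce simp: not_above_diag_def)
next
  assume diag: "\<forall>j\<in>{1..N}. j \<le> a j"
  have "y \<le> x" if "(x, y) \<in> set (entry_path a N)" for x y
  proof (cases "1 \<le> y")
    case True
    then have "nat y \<in> {1..N}" "int (a (nat y)) \<le> x"
      using entry_path_points[OF assms that] by auto
    then show ?thesis
      using diag True by fastforce
  qed (use entry_path_points[OF assms that] in auto)
  then show "not_above_diag (entry_path a N)"
    by (auto simp: not_above_diag_def)
qed

lemma sigma_eq:
  assumes "inj_on s {1..n}" "i \<in> {1..n}"
  shows "sigma n s (s i) = i"
  unfolding sigma_def using assms by (auto intro!: the_equality dest: inj_onD)

lemma sigma_mem:
  assumes "bij_betw s {1..n} X" "x \<in> X"
  shows "sigma n s x \<in> {1..n}" "s (sigma n s x) = x"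
proof -
  obtain i where "i \<in> {1..n}" "x = s i"
    using assms by (auto simp: bij_betw_def)
  then show "sigma n s x \<in> {1..n}" "s (sigma n s x) = x"
    using sigma_eq[of s n i] assms(1) by (auto simp: bij_betw_def)
qed

lemma mem_image_iff_sigma_le:
  assumes "bij_betw s {1..n} X" "x \<in> X"
  shows "x \<in> s ` {1..m} \<longleftrightarrow> sigma n s x \<le> m"
proof
  assume "x \<in> s ` {1..m}"
  then obtain i where i: "i \<in> {1..m}" "x = s i"
    by auto
  show "sigma n s x \<le> m"
  proof (cases "i \<le> n")
    case True
    then show ?thesis
      using sigma_eq[of s n i] assms(1) i by (auto simp: bij_betw_def)
  next
    case False
    then show ?thesis
      using sigma_mem[OF assms] i by auto
  qed
next
  assume "sigma n s x \<le> m"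
  then show "x \<in> s ` {1..m}"
    using sigma_mem[OF assms] by (metis atLeastAtMost_iff image_eqI)
qed

lemma cat_leaves_subset_iff:
  assumes "bij_betw g {1..n} X" "bij_betw s {1..n} X" "v + 1 \<le> n"
  shows "cat_leaves g v \<subseteq> cat_leaves s e \<longleftrightarrow> Ffun n g s v \<le> int e"
proof -
  have g: "g k \<in> X" if "k \<in> {1..v + 1}" for k
    using that assms(1,3) by (auto simp: bij_betw_def)
  have "cat_leaves g v \<subseteq> cat_leaves s e \<longleftrightarrow> (\<forall>k\<in>{1..v + 1}. g k \<in> s ` {1..e + 1})"
    unfolding cat_leaves_def by blast
  also have "\<dots> \<longleftrightarrow> (\<forall>k\<in>{1..v + 1}. sigma n s (g k) \<le> e + 1)"
    using mem_image_iff_sigma_le[OF assms(2) g] by simp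
  also have "\<dots> \<longleftrightarrow> Max ((\<lambda>k. sigma n s (g k)) ` {1..v + 1}) \<le> e + 1"
    by simp
  also have "\<dots> \<longleftrightarrow> Ffun n g s v \<le> int e"
    unfolding Ffun_def by linarith
  finally show ?thesis .
qed

lemma Ffun_ge:
  assumes "bij_betw g {1..n} X" "bij_betw s {1..n} X" "v + 1 \<le> n"
  shows "int v \<le> Ffun n g s v"
proof -
  define A where "A = (\<lambda>k. sigma n s (g k)) ` {1..v + 1}"
  have g: "g k \<in> X" if "k \<in> {1..v + 1}" for k
    using that assms(1,3) by (auto simp: bij_betw_def)
  have "inj_on (\<lambda>k. sigma n s (g k)) {1..v + 1}"
  proof (rule inj_onI)
    fix k k' assume k: "k \<in> {1..v + 1}" "k' \<in> {1..v + 1}" "sigma n s (g k) = sigma n s (g k')"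
    then have "g k = g k'"
      using sigma_mem(2)[OF assms(2) g] by metis
    then show "k = k'"
      using k(1,2) assms(1,3) by (auto simp: bij_betw_def dest: inj_onD)
  qed
  then have "card A = v + 1"
    unfolding A_def by (simp add: card_image)
  moreover have "A \<subseteq> {1..Max A}"
    using sigma_mem(1)[OF assms(2) g] by (auto simp: A_def)
  then have "card A \<le> Max A"
    using card_mono[of "{1..Max A}" A] by simp
  ultimately show ?thesis
    unfolding Ffun_def A_def[symmetric] by linarith
qed

lemma coal_histories_eq:
  assumes "bij_betw g {1..n} X" "bij_betw s {1..n} X"
  shows "coal_histories n g s =
    {h \<in> monotone_maps (n - 1). \<forall>v\<in>{1..n - 1}. Ffun n g s v \<le> int (h v)}"
proof -
  have leaves: "cat_leaves g v \<subseteq> cat_leaves s e \<longleftrightarrow> Ffun n g s v \<le> int e"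
    if "v \<in> {1..n - 1}" for v e
  proof -
    have "v + 1 \<le> n"
      using that by auto
    then show ?thesis
      by (rule cat_leaves_subset_iff[OF assms])
  qed
  have codomain: "h \<in> {1..n - 1} \<rightarrow>\<^sub>E {1..n - 1} \<longleftrightarrow> h \<in> {1..n - 1} \<rightarrow>\<^sub>E {0..n - 1}"
    if F: "\<forall>v\<in>{1..n - 1}. Ffun n g s v \<le> int (h v)" for h
  proof -
    have "h v \<in> {1..n - 1} \<longleftrightarrow> h v \<in> {0..n - 1}" if v: "v \<in> {1..n - 1}" for v
    proof -
      have "int v \<le> Ffun n g s v"
        using Ffun_ge[OF assms, of v] v by auto
      moreover have "Ffun n g s v \<le> int (h v)"
        using F v by blast
      ultimately show ?thesis
        using v by auto
    qed
    then show ?thesis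
      unfolding PiE_iff by blast
  qed
  have mono: "(\<forall>v1\<in>{1..n - 1}. \<forall>v2\<in>{1..n - 1}. v2 \<le> v1 \<longrightarrow> h v2 \<le> h v1) \<longleftrightarrow>
      mono_on {1..n - 1} h" for h :: "nat \<Rightarrow> nat"
    by (auto simp: monotone_on_def)
  show ?thesis
  proof (rule set_eqI)
    fix h
    have "(\<forall>v\<in>{1..n - 1}. cat_leaves g v \<subseteq> cat_leaves s (h v)) \<longleftrightarrow>
        (\<forall>v\<in>{1..n - 1}. Ffun n g s v \<le> int (h v))"
      using leaves by auto
    then show "h \<in> coal_histories n g s \<longleftrightarrow>
        h \<in> {h \<in> monotone_maps (n - 1). \<forall>v\<in>{1..n - 1}. Ffun n g s v \<le> int (h v)}"
      unfolding coal_histories_def monotone_maps_def cat_desc_def mem_Collect_eq mono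
      using codomain by blast
  qed
qed

lemma entry_path_mem_roadblock_paths_iff:
  assumes "bij_betw g {1..n} X" "bij_betw s {1..n} X" "1 \<le> n" "h \<in> monotone_maps (n - 1)"
  shows "entry_path h (n - 1) \<in> roadblock_paths n g s \<longleftrightarrow>
    (\<forall>v\<in>{1..n - 1}. Ffun n g s v \<le> int (h v))"
proof -
  let ?p = "entry_path h (n - 1)"
  have Ffun: "int v \<le> Ffun n g s v" if "v \<in> {1..n - 1}" for v
    using Ffun_ge[OF assms(1,2), of v] that by auto
  have "monotonic_path ?p (int n - 1) (int n - 1)"
    using entry_path_monotonic[OF assms(4)] assms(3) by (simp add: of_nat_diff)
  then have "?p \<in> roadblock_paths n g s \<longleftrightarrow>
      (\<forall>j\<in>{1..n - 1}. j \<le> h j) \<and> set ?p \<inter> roadblocks n g s = {}"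
    using not_above_diag_entry_path_iff[OF assms(4)] by (simp add: roadblock_paths_def)
  also have "\<dots> \<longleftrightarrow> (\<forall>v\<in>{1..n - 1}. Ffun n g s v \<le> int (h v))"
  proof safe
    fix v assume diag: "\<forall>j\<in>{1..n - 1}. j \<le> h j"
      and avoid: "set ?p \<inter> roadblocks n g s = {}" and v: "v \<in> {1..n - 1}"
    have "(int (h v), int v) \<notin> roadblocks n g s"
      using avoid entry_path_mem[OF assms(4) v] by blast
    moreover have "h v \<le> n - 1"
      using PiE_mem[of h "{1..n - 1}" "\<lambda>_. {0..n - 1}" v] assms(4) v
      by (simp add: monotone_maps_def)
    ultimately show "Ffun n g s v \<le> int (h v)"
      using diag v assms(3) by (auto simp: roadblocks_def)
  next
    fix j assume F: "\<forall>v\<in>{1..n - 1}. Ffun n g s v \<le> int (h v)" and j: "j \<in> {1..n - 1}"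
    have "int j \<le> int (h j)"
      using Ffun[OF j] F j by fastforce
    then show "j \<le> h j"
      by simp
  next
    fix x y assume F: "\<forall>v\<in>{1..n - 1}. Ffun n g s v \<le> int (h v)"
      and xy: "(x, y) \<in> set ?p" "(x, y) \<in> roadblocks n g s"
    then have y: "1 \<le> y" "x < Ffun n g s (nat y)"
      by (auto simp: roadblocks_def)
    moreover have "nat y \<in> {1..n - 1}" "int (h (nat y)) \<le> x"
      using entry_path_points[OF assms(4) xy(1)] y(1) by auto
    ultimately show "(x, y) \<in> {}"
      using F by fastforce
  qed
  finally show ?thesis .
qed

theorem proposition1:
  fixes n :: nat and X :: "'a set" and g s :: "nat \<Rightarrow> 'a"
  assumes "n \<ge> 2"
    and "bij_betw g {1..n} X"
    and "bij_betw s {1..n} X"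
  shows "\<exists>f. bij_betw f (coal_histories n g s) (roadblock_paths n g s)"
proof -
  let ?f = "\<lambda>h. entry_path h (n - 1)"
  have histories: "coal_histories n g s = {h \<in> monotone_maps (n - 1). ?f h \<in> roadblock_paths n g s}"
    unfolding coal_histories_eq[OF assms(2,3)]
    using entry_path_mem_roadblock_paths_iff[OF assms(2,3)] assms(1) by auto
  have "roadblock_paths n g s \<subseteq> {p. monotonic_path p (int (n - 1)) (int (n - 1))}"
    using assms(1) by (auto simp: roadblock_paths_def of_nat_diff)
  then have "bij_betw ?f (coal_histories n g s) (roadblock_paths n g s)"
    unfolding histories by (rule bij_betw_preimage_subset[OF bij_betw_entry_path])
  then show ?thesis
    by blast
qed

end
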